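(* Let $0<a_1\le a_2$ and $q\ge 2$. Let $e_1,e_2,\ldots$ be a sequence of non-negative integers with $$a_1 q^n/n \le e_n \le a_2 q^n/n\quad\text{for all } n\ge1,$$ and define $d_0=1,d_1,d_2,\ldots$ by the formal power series identity $\sum_{n\ge0} d_n x^n = \prod_{n\ge1}(1-x^n)^{-e_n}$. Then there exist constants $A_1$ depending only on $a_1$ and $A_2$ depending only on $a_2$ such that for all $n\ge 0$, $$(n+1)^{A_1}q^n \le d_n \le (n+1)^{A_2}q^n.$$ *)

theory Defs
  imports Complex_Main "HOL-Computational_Algebra.Formal_Power_Series"
begin

text \<open>The n-th coefficient of the infinite product only depends on the factors with k <= n
  (the remaining factors are 1 + O(x^(n+1))), so it equals the n-th coefficient of the
  finite product over k = 1..n.\<close>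
definition euler_prod_coeff :: "(nat \<Rightarrow> nat) \<Rightarrow> nat \<Rightarrow> real" where
  "euler_prod_coeff e n =
     fps_nth (\<Prod>k\<in>{1..n}. (inverse (1 - fps_X ^ k :: real fps)) ^ (e k)) n"

end

theory Submission
  imports Defs "HOL-Analysis.Harmonic_Numbers"
begin

(* Every factor (1 - x^k)^(-e_k) = (1 + x^k + x^(2k) + ...)^(e_k) has nonnegative coefficients
   and constant term 1.

   Lower bound: d_n is therefore at least the coefficient of x^n in (1 - x^n)^(-e_n), which is
   at least e_n >= a_1 q^n / n.

   Upper bound: on series with nonnegative coefficients, evaluation of the truncation to degree n
   at x = 1/q is submultiplicative. Hence d_n q^(-n) <= prod_(k<=n) (1 - q^(-k))^(-e_k)
   <= exp (sum_(k<=n) e_k (q^(-k) + 2 q^(-2k))) <= exp (a_2 (H_n + 2)), and H_n <= ln n + 1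
   makes this polynomial in n. *)

unbundle no vec_syntax
unbundle fps_syntax

definition geom_X_power :: "nat \<Rightarrow> 'a::zero_neq_one fps" where
  "geom_X_power k = Abs_fps (\<lambda>m. if k dvd m then 1 else 0)"

lemma geom_X_power_nth_0 [simp]: "geom_X_power k $ 0 = 1"
  by (simp add: geom_X_power_def)

lemma geom_X_power_nth_self [simp]: "geom_X_power k $ k = 1"
  by (simp add: geom_X_power_def)

lemma fps_inverse_one_minus_X_power:
  assumes "0 < k"
  shows "inverse (1 - fps_X ^ k :: 'a::field fps) = geom_X_power k"
proof (rule fps_inverse_unique, rule fps_ext)
  fix n
  show "((1 - fps_X ^ k) * geom_X_power k) $ n = (1 :: 'a fps) $ n"
  proof (cases "n < k")
    case True
    then show ?thesis using assms
      by (auto simp: algebra_simps fps_X_power_mult_nth geom_X_power_def dest: dvd_imp_le)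
  next
    case False
    then have "k dvd n \<longleftrightarrow> k dvd (n - k)"
      by (simp add: dvd_minus_self)
    then show ?thesis using False assms
      by (auto simp: algebra_simps fps_X_power_mult_nth geom_X_power_def)
  qed
qed

lemma euler_prod_coeff_geom:
  "euler_prod_coeff e n = (\<Prod>k\<in>{1..n}. geom_X_power k ^ e k) $ n"
  unfolding euler_prod_coeff_def
  by (intro arg_cong[where f = "\<lambda>F. F $ n"] prod.cong) (auto simp: fps_inverse_one_minus_X_power)

lemma euler_prod_coeff_0 [simp]: "euler_prod_coeff e 0 = 1"
  by (simp add: euler_prod_coeff_def)

definition fps_nonneg :: "'a::linordered_idom fps \<Rightarrow> bool" where
  "fps_nonneg F \<longleftrightarrow> (\<forall>i. 0 \<le> F $ i)"

lemma fps_nonneg_one [simp]: "fps_nonneg 1"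
  by (simp add: fps_nonneg_def)

lemma fps_nonneg_mult: "fps_nonneg F \<Longrightarrow> fps_nonneg H \<Longrightarrow> fps_nonneg (F * H)"
  unfolding fps_nonneg_def fps_mult_nth by (auto intro!: sum_nonneg)

lemma fps_nonneg_power: "fps_nonneg F \<Longrightarrow> fps_nonneg (F ^ m)"
  by (induction m) (simp_all add: fps_nonneg_mult)

lemma fps_nonneg_prod: "(\<And>k. k \<in> S \<Longrightarrow> fps_nonneg (f k)) \<Longrightarrow> fps_nonneg (\<Prod>k\<in>S. f k)"
  by (induction S rule: infinite_finite_induct) (simp_all add: fps_nonneg_mult)

lemma fps_nonneg_geom_X_power: "fps_nonneg (geom_X_power k)"
  by (simp add: fps_nonneg_def geom_X_power_def)

lemma fps_nth_mult_ge_left: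
  assumes "fps_nonneg F" "fps_nonneg H"
  shows "F $ n * H $ 0 \<le> (F * H) $ n"
proof -
  have "F $ n * H $ (n - n) \<le> (\<Sum>i=0..n. F $ i * H $ (n - i))"
    by (rule member_le_sum) (use assms in \<open>auto simp: fps_nonneg_def\<close>)
  then show ?thesis by (simp add: fps_mult_nth)
qed

lemma fps_nth_mult_ge:
  assumes "fps_nonneg F" "fps_nonneg H" "1 \<le> n"
  shows "F $ n * H $ 0 + F $ 0 * H $ n \<le> (F * H) $ n"
proof -
  have "(\<Sum>i\<in>{n, 0}. F $ i * H $ (n - i)) \<le> (\<Sum>i=0..n. F $ i * H $ (n - i))"
    using assms by (intro sum_mono2) (auto simp: fps_nonneg_def)
  then show ?thesis using assms by (simp add: fps_mult_nth)
qed

lemma fps_nth_power_ge: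
  assumes "fps_nonneg F" "F $ 0 = 1" "1 \<le> n"
  shows "of_nat m * F $ n \<le> (F ^ m) $ n"
proof (induction m)
  case (Suc m)
  have "F $ n * (F ^ m) $ 0 + F $ 0 * (F ^ m) $ n \<le> (F * F ^ m) $ n"
    using assms by (intro fps_nth_mult_ge fps_nonneg_power)
  then show ?case using Suc assms by (simp add: fps_nth_power_0 algebra_simps)
qed simp

lemma fps_prod_nth_0: "(\<Prod>k\<in>S. f k) $ 0 = (\<Prod>k\<in>S. f k $ 0 :: 'a::comm_ring_1)"
  by (induction S rule: infinite_finite_induct) auto

lemma fps_nth_prod_ge_factor:
  assumes "finite S" "j \<in> S" "\<And>k. k \<in> S \<Longrightarrow> fps_nonneg (f k)" "\<And>k. k \<in> S \<Longrightarrow> f k $ 0 = 1"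
  shows "f j $ n \<le> (\<Prod>k\<in>S. f k) $ n"
proof -
  have "(\<Prod>k\<in>S - {j}. f k) $ 0 = 1"
    using assms by (simp add: fps_prod_nth_0)
  moreover have "f j $ n * (\<Prod>k\<in>S - {j}. f k) $ 0 \<le> (f j * (\<Prod>k\<in>S - {j}. f k)) $ n"
    using assms by (intro fps_nth_mult_ge_left fps_nonneg_prod) auto
  ultimately show ?thesis
    using assms by (simp add: prod.remove)
qed

lemma euler_prod_coeff_ge_exponent:
  assumes "1 \<le> n"
  shows "real (e n) \<le> euler_prod_coeff e n"
proof -
  have "real (e n) * geom_X_power n $ n \<le> (geom_X_power n ^ e n) $ n"
    using assms by (intro fps_nth_power_ge fps_nonneg_geom_X_power) simp
  also have "\<dots> \<le> (\<Prod>k\<in>{1..n}. geom_X_power k ^ e k) $ n"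
    using assms
    by (intro fps_nth_prod_ge_factor[where f = "\<lambda>k. geom_X_power k ^ e k"]
        fps_nonneg_power fps_nonneg_geom_X_power) (auto simp: fps_nth_power_0)
  finally show ?thesis by (simp add: euler_prod_coeff_geom)
qed

definition fps_trunc_eval :: "nat \<Rightarrow> 'a::comm_semiring_1 fps \<Rightarrow> 'a \<Rightarrow> 'a" where
  "fps_trunc_eval n F x = (\<Sum>i\<le>n. F $ i * x ^ i)"

lemma fps_trunc_eval_one [simp]: "fps_trunc_eval n 1 x = 1"
  by (simp add: fps_trunc_eval_def fps_one_nth if_distrib[where f = "\<lambda>c. c * _"] cong: if_cong)

lemma fps_trunc_eval_nonneg: "fps_nonneg F \<Longrightarrow> 0 \<le> x \<Longrightarrow> 0 \<le> fps_trunc_eval n F x"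
  unfolding fps_trunc_eval_def fps_nonneg_def by (auto intro!: sum_nonneg)

lemma fps_nth_mult_power_le_trunc_eval:
  "fps_nonneg F \<Longrightarrow> 0 \<le> x \<Longrightarrow> F $ n * x ^ n \<le> fps_trunc_eval n F x"
  unfolding fps_trunc_eval_def fps_nonneg_def by (intro member_le_sum) auto

lemma fps_trunc_eval_mult_le:
  assumes "fps_nonneg F" "fps_nonneg H" "0 \<le> x"
  shows "fps_trunc_eval n (F * H) x \<le> fps_trunc_eval n F x * fps_trunc_eval n H x"
proof -
  have "fps_trunc_eval n (F * H) x = (\<Sum>i\<le>n. \<Sum>j\<le>i. (F $ j * x ^ j) * (H $ (i - j) * x ^ (i - j)))"
    unfolding fps_trunc_eval_def fps_mult_nth
    by (auto simp: sum_distrib_right atLeast0AtMost power_add[symmetric] intro!: sum.cong)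
  also have "\<dots> = (\<Sum>(j, l)\<in>{(j, l). j + l \<le> n}. (F $ j * x ^ j) * (H $ l * x ^ l))"
    by (rule sum.triangle_reindex_eq[symmetric])
  also have "\<dots> \<le> (\<Sum>(j, l)\<in>{..n} \<times> {..n}. (F $ j * x ^ j) * (H $ l * x ^ l))"
    using assms by (intro sum_mono2) (auto simp: fps_nonneg_def)
  also have "\<dots> = fps_trunc_eval n F x * fps_trunc_eval n H x"
    unfolding fps_trunc_eval_def by (simp add: sum_product sum.cartesian_product)
  finally show ?thesis .
qed

lemma fps_trunc_eval_power_le:
  assumes "fps_nonneg F" "0 \<le> x"
  shows "fps_trunc_eval n (F ^ m) x \<le> fps_trunc_eval n F x ^ m"
proof (induction m)
  case (Suc m)
  have "fps_trunc_eval n (F * F ^ m) x \<le> fps_trunc_eval n F x * fps_trunc_eval n (F ^ m) x"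
    using assms by (intro fps_trunc_eval_mult_le fps_nonneg_power)
  also have "\<dots> \<le> fps_trunc_eval n F x * fps_trunc_eval n F x ^ m"
    using Suc assms by (intro mult_left_mono fps_trunc_eval_nonneg)
  finally show ?case by simp
qed simp

lemma fps_trunc_eval_prod_le:
  assumes "\<And>k. k \<in> S \<Longrightarrow> fps_nonneg (f k)" "0 \<le> x"
  shows "fps_trunc_eval n (\<Prod>k\<in>S. f k) x \<le> (\<Prod>k\<in>S. fps_trunc_eval n (f k) x)"
  using assms(1)
proof (induction S rule: infinite_finite_induct)
  case (insert a S)
  have "fps_trunc_eval n (f a * (\<Prod>k\<in>S. f k)) x
          \<le> fps_trunc_eval n (f a) x * fps_trunc_eval n (\<Prod>k\<in>S. f k) x"
    using insert assms by (intro fps_trunc_eval_mult_le fps_nonneg_prod) auto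
  also have "\<dots> \<le> fps_trunc_eval n (f a) x * (\<Prod>k\<in>S. fps_trunc_eval n (f k) x)"
    using insert assms by (intro mult_left_mono fps_trunc_eval_nonneg) auto
  finally show ?case using insert by simp
qed simp_all

lemma fps_trunc_eval_geom_X_power_le:
  fixes x :: "'a::linordered_field"
  assumes "0 < k" "0 \<le> x" "x < 1"
  shows "fps_trunc_eval n (geom_X_power k) x \<le> 1 / (1 - x ^ k)"
proof -
  have xk: "0 \<le> x ^ k" "x ^ k < 1"
    using assms by (auto simp: power_less_one_iff)
  have "fps_trunc_eval n (geom_X_power k) x = (\<Sum>i\<in>{i\<in>{..n}. k dvd i}. x ^ i)"
    unfolding fps_trunc_eval_def geom_X_power_def
    by (simp add: sum.inter_filter[symmetric] if_distrib[where f = "\<lambda>c. c * _"] cong: if_cong)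
  also have "\<dots> \<le> (\<Sum>i\<in>(\<lambda>m. k * m) ` {..n}. x ^ i)"
  proof (rule sum_mono2)
    show "{i \<in> {..n}. k dvd i} \<subseteq> (\<lambda>m. k * m) ` {..n}"
    proof (intro subsetI, elim CollectE conjE dvdE)
      fix i m assume i: "i \<in> {..n}" "i = k * m"
      have "m \<le> k * m" using assms by simp
      with i have "m \<in> {..n}" by (simp only: atMost_iff)
      with i show "i \<in> (\<lambda>m. k * m) ` {..n}" by blast
    qed
  qed (use assms in auto)
  also have "\<dots> = (\<Sum>m\<le>n. (x ^ k) ^ m)"
    using assms by (subst sum.reindex) (auto simp: inj_on_def power_mult)
  also have "\<dots> = (1 - (x ^ k) ^ Suc n) / (1 - x ^ k)"
    using xk by (simp add: sum_gp0)
  also have "\<dots> \<le> 1 / (1 - x ^ k)"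
    using xk by (intro divide_right_mono) auto
  finally show ?thesis .
qed

lemma euler_prod_coeff_mult_power_le:
  assumes "0 \<le> x" "x < 1"
  shows "euler_prod_coeff e n * x ^ n \<le> (\<Prod>k\<in>{1..n}. (1 / (1 - x ^ k)) ^ e k)"
proof -
  have "euler_prod_coeff e n * x ^ n \<le> fps_trunc_eval n (\<Prod>k\<in>{1..n}. geom_X_power k ^ e k) x"
    unfolding euler_prod_coeff_geom using assms
    by (intro fps_nth_mult_power_le_trunc_eval fps_nonneg_prod fps_nonneg_power fps_nonneg_geom_X_power)
  also have "\<dots> \<le> (\<Prod>k\<in>{1..n}. fps_trunc_eval n (geom_X_power k ^ e k) x)"
    using assms by (intro fps_trunc_eval_prod_le fps_nonneg_power fps_nonneg_geom_X_power)
  also have "\<dots> \<le> (\<Prod>k\<in>{1..n}. fps_trunc_eval n (geom_X_power k) x ^ e k)"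
    using assms by (intro prod_mono conjI fps_trunc_eval_nonneg fps_trunc_eval_power_le
        fps_nonneg_power fps_nonneg_geom_X_power)
  also have "\<dots> \<le> (\<Prod>k\<in>{1..n}. (1 / (1 - x ^ k)) ^ e k)"
    using assms by (intro prod_mono conjI power_mono fps_trunc_eval_geom_X_power_le
        fps_trunc_eval_nonneg zero_le_power fps_nonneg_geom_X_power) auto
  finally show ?thesis .
qed

lemma inverse_one_minus_power_le_exp:
  fixes z :: real
  assumes "0 \<le> z" "z \<le> 1/2"
  shows "(1 / (1 - z)) ^ m \<le> exp (real m * (z + 2 * z\<^sup>2))"
proof -
  have "(1 / (1 - z)) ^ m = exp (real m * - ln (1 - z))"
    using assms by (simp add: exp_of_nat_mult exp_minus inverse_eq_divide power_one_over)
  also have "\<dots> \<le> exp (real m * (z + 2 * z\<^sup>2))"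
    using ln_one_minus_pos_lower_bound[OF assms] by (intro exp_mono mult_left_mono) auto
  finally show ?thesis .
qed

lemma euler_exponent_term_le:
  fixes q a :: real
  assumes "2 \<le> q" "0 \<le> a" "1 \<le> k" "real m \<le> a * q ^ k / real k"
  shows "real m * ((1 / q) ^ k + 2 * ((1 / q) ^ k)\<^sup>2) \<le> a / real k + 2 * a * (1/2) ^ k"
proof -
  have first: "real m * (1 / q) ^ k \<le> a / real k"
    using assms by (simp add: power_one_over field_simps)
  have "(1 / q) ^ k \<le> (1/2) ^ k"
    using assms by (intro power_mono) (auto simp: field_simps)
  moreover have "a / real k \<le> a"
    using divide_left_mono[of 1 "real k" a] assms by simp
  ultimately have "(real m * (1 / q) ^ k) * (1 / q) ^ k \<le> a * (1/2) ^ k"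
    using first assms by (intro mult_mono) auto
  with first show ?thesis
    by (simp add: power2_eq_square algebra_simps)
qed

lemma sum_divide_harm: "(\<Sum>k=1..n. a / real k) = a * harm n"
  by (simp only: harm_def sum_distrib_left divide_inverse)

lemma sum_power_half: "(\<Sum>k=1..n. (1/2::real) ^ k) = 1 - (1/2) ^ n"
  by (induction n) (simp_all add: field_simps)

lemma euler_prod_coeff_le_exp_harm:
  fixes q a :: real
  assumes "2 \<le> q" "0 \<le> a" "\<And>k. 1 \<le> k \<Longrightarrow> real (e k) \<le> a * q ^ k / real k"
  shows "euler_prod_coeff e n \<le> exp (a * (harm n + 2)) * q ^ n"
proof -
  define x where "x = 1 / q"
  have x: "0 \<le> x" "x \<le> 1/2"
    using assms(1) by (auto simp: x_def field_simps)
  have xk: "0 \<le> x ^ k" "x ^ k \<le> 1/2" if "1 \<le> k" for k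
    using x power_decreasing[of 1 k x] that by auto
  have "euler_prod_coeff e n * x ^ n \<le> (\<Prod>k\<in>{1..n}. (1 / (1 - x ^ k)) ^ e k)"
    using x by (intro euler_prod_coeff_mult_power_le) auto
  also have "\<dots> \<le> (\<Prod>k\<in>{1..n}. exp (real (e k) * (x ^ k + 2 * (x ^ k)\<^sup>2)))"
  proof (rule prod_mono)
    fix k assume "k \<in> {1..n}"
    then have "0 \<le> x ^ k" "x ^ k \<le> 1/2"
      using xk by auto
    then show "0 \<le> (1 / (1 - x ^ k)) ^ e k \<and>
        (1 / (1 - x ^ k)) ^ e k \<le> exp (real (e k) * (x ^ k + 2 * (x ^ k)\<^sup>2))"
      using x by (intro conjI zero_le_power inverse_one_minus_power_le_exp) auto
  qed
  also have "\<dots> = exp (\<Sum>k\<in>{1..n}. real (e k) * (x ^ k + 2 * (x ^ k)\<^sup>2))"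
    by (simp add: exp_sum)
  also have "\<dots> \<le> exp (\<Sum>k\<in>{1..n}. a / real k + 2 * a * (1/2) ^ k)"
    unfolding x_def using assms by (intro exp_mono sum_mono euler_exponent_term_le) auto
  also have "\<dots> = exp (a * harm n + 2 * a * (\<Sum>k=1..n. (1/2) ^ k))"
    by (simp only: sum.distrib sum_distrib_left sum_divide_harm)
  also have "\<dots> = exp (a * harm n + 2 * a * (1 - (1/2) ^ n))"
    by (simp only: sum_power_half)
  also have "\<dots> \<le> exp (a * (harm n + 2))"
    using assms(2) by (simp add: algebra_simps)
  finally have "euler_prod_coeff e n * x ^ n \<le> exp (a * (harm n + 2))" .
  then have "euler_prod_coeff e n * x ^ n * q ^ n \<le> exp (a * (harm n + 2)) * q ^ n"
    using assms(1) by (intro mult_right_mono) simp_all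
  moreover have "x ^ n * q ^ n = 1"
    using assms(1) by (simp add: x_def power_one_over)
  ultimately show ?thesis
    by (simp add: mult.assoc)
qed

definition lower_exponent :: "real \<Rightarrow> real" where
  "lower_exponent a = min (-1) (log 2 a - 1)"

definition upper_exponent :: "real \<Rightarrow> real" where
  "upper_exponent a = a + 3 * a / ln 2"

lemma powr_lower_exponent_le:
  assumes "0 < a" "1 \<le> n"
  shows "(real n + 1) powr lower_exponent a \<le> a / real n"
proof -
  have "(real n + 1) powr (lower_exponent a + 1) \<le> 2 powr (lower_exponent a + 1)"
    using assms by (intro powr_mono2') (auto simp: lower_exponent_def)
  also have "\<dots> \<le> 2 powr (log 2 a)"
    by (intro powr_mono) (auto simp: lower_exponent_def)
  also have "\<dots> = a"
    using assms by simp
  finally have "(real n + 1) powr lower_exponent a \<le> a / (real n + 1)"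
    by (simp add: powr_add field_simps)
  also have "\<dots> \<le> a / real n"
    using assms by (intro divide_left_mono) auto
  finally show ?thesis .
qed

lemma exp_harm_le_powr_upper_exponent:
  assumes "0 \<le> a" "1 \<le> n"
  shows "exp (a * (harm n + 2)) \<le> (real n + 1) powr upper_exponent a"
proof -
  have "harm n - ln (real n) \<le> 1"
    using euler_mascheroni_sequence_decreasing[of 1 n] assms by (simp add: harm_def)
  moreover have "ln (real n) \<le> ln (real n + 1)"
    using assms by simp
  ultimately have "harm n + 2 \<le> ln (real n + 1) + 3"
    by linarith
  then have "a * (harm n + 2) \<le> a * (ln (real n + 1) + 3)"
    using assms(1) by (rule mult_left_mono)
  then have "exp (a * (harm n + 2)) \<le> exp (a * ln (real n + 1) + 3 * a)"
    by (simp add: algebra_simps)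
  also have "\<dots> = (real n + 1) powr a * 2 powr (3 * a / ln 2)"
    by (simp add: exp_add powr_def mult.commute)
  also have "\<dots> \<le> (real n + 1) powr a * (real n + 1) powr (3 * a / ln 2)"
    using assms by (intro mult_left_mono powr_mono2) auto
  also have "\<dots> = (real n + 1) powr upper_exponent a"
    by (simp add: upper_exponent_def powr_add)
  finally show ?thesis .
qed

lemma euler_prod_coeff_lower_bound:
  fixes a q :: real
  assumes "0 < a" "0 \<le> q" "\<And>k. 1 \<le> k \<Longrightarrow> a * q ^ k / real k \<le> real (e k)"
  shows "(real n + 1) powr lower_exponent a * q ^ n \<le> euler_prod_coeff e n"
proof (cases "n = 0")
  case False
  then have n: "1 \<le> n" by simp
  have "(real n + 1) powr lower_exponent a * q ^ n \<le> a / real n * q ^ n"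
    by (rule mult_right_mono[OF powr_lower_exponent_le[OF assms(1) n]]) (use assms(2) in simp)
  also have "\<dots> \<le> real (e n)"
    using assms(3)[OF n] by simp
  also have "\<dots> \<le> euler_prod_coeff e n"
    using n by (rule euler_prod_coeff_ge_exponent)
  finally show ?thesis .
qed simp

lemma euler_prod_coeff_upper_bound:
  fixes a q :: real
  assumes "0 \<le> a" "2 \<le> q" "\<And>k. 1 \<le> k \<Longrightarrow> real (e k) \<le> a * q ^ k / real k"
  shows "euler_prod_coeff e n \<le> (real n + 1) powr upper_exponent a * q ^ n"
proof (cases "n = 0")
  case False
  then have n: "1 \<le> n" by simp
  have "euler_prod_coeff e n \<le> exp (a * (harm n + 2)) * q ^ n"
    using assms by (intro euler_prod_coeff_le_exp_harm)
  also have "\<dots> \<le> (real n + 1) powr upper_exponent a * q ^ n"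
    by (rule mult_right_mono[OF exp_harm_le_powr_upper_exponent[OF assms(1) n]]) (use assms(2) in simp)
  finally show ?thesis .
qed simp

theorem proposition2p2:
  "\<exists>A1 A2 :: real \<Rightarrow> real.
     \<forall>(a1::real) (a2::real) (q::real) (e::nat \<Rightarrow> nat).
       0 < a1 \<longrightarrow> a1 \<le> a2 \<longrightarrow> 2 \<le> q \<longrightarrow>
       (\<forall>n\<ge>1. a1 * q ^ n / real n \<le> real (e n) \<and> real (e n) \<le> a2 * q ^ n / real n) \<longrightarrow>
       (\<forall>n::nat. (real n + 1) powr (A1 a1) * q ^ n \<le> euler_prod_coeff e n \<and>
                 euler_prod_coeff e n \<le> (real n + 1) powr (A2 a2) * q ^ n)"
proof (rule exI[of _ lower_exponent], rule exI[of _ upper_exponent], intro allI impI conjI)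
  fix a1 a2 q :: real and e :: "nat \<Rightarrow> nat" and n :: nat
  assume a1: "0 < a1" and a12: "a1 \<le> a2" and q: "2 \<le> q"
    and e_bounds: "\<forall>n\<ge>1. a1 * q ^ n / real n \<le> real (e n) \<and> real (e n) \<le> a2 * q ^ n / real n"
  show "(real n + 1) powr lower_exponent a1 * q ^ n \<le> euler_prod_coeff e n"
    using a1 q e_bounds by (intro euler_prod_coeff_lower_bound) auto
  show "euler_prod_coeff e n \<le> (real n + 1) powr upper_exponent a2 * q ^ n"
    using a1 a12 q e_bounds by (intro euler_prod_coeff_upper_bound) auto
qed

end
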